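(* Let $\mathcal B$ be finite, $\eta>0$, $Q,\tilde Q\in\mathbb R^{\mathcal B}$, $V=\eta^{-1}\log\sum_be^{\eta Q(b)}$, $\tilde V=\eta^{-1}\log\sum_be^{\eta\tilde Q(b)}$, $A=Q-V\mathbf 1$, $\tilde A=\tilde Q-\tilde V\mathbf 1$, $\nu=\exp(\eta A)$, $\tilde\nu=\exp(\eta\tilde A)$, and let $B_A>0$ with $\max\{\|A\|_\infty,\|\tilde A\|_\infty\}\le B_A$. Then $$D_{\rm H}^2(\nu,\tilde\nu)\ge\frac{\eta^2}{8(1+\eta B_A)^2}\,\langle\nu,(\tilde A-A)^2\rangle_{\mathcal B}.$$
   Context: $D_{\rm H}^2(p,q)=\frac12\sum_b(\sqrt{p(b)}-\sqrt{q(b)})^2$; $\langle f,g\rangle_{\mathcal B}=\sum_bf(b)g(b)$; squares are entrywise. *)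

theory Defs
  imports "HOL-Analysis.Analysis"
begin

definition hellinger_sq :: "'b set \<Rightarrow> ('b \<Rightarrow> real) \<Rightarrow> ('b \<Rightarrow> real) \<Rightarrow> real" where
  "hellinger_sq B p q = (1/2) * (\<Sum>b\<in>B. (sqrt (p b) - sqrt (q b))^2)"

definition lse_value :: "'b set \<Rightarrow> real \<Rightarrow> ('b \<Rightarrow> real) \<Rightarrow> real" where
  "lse_value B \<eta> Q = ln (\<Sum>b\<in>B. exp (\<eta> * Q b)) / \<eta>"

end

theory Submission
  imports Defs
begin

text \<open>
  Write \<open>\<nu> = exp u\<close> and \<open>\<tilde>\<nu> = exp v\<close> with \<open>u = \<eta> A\<close> and \<open>v = \<eta> \<tilde>A\<close>. Each summand of the
  Hellinger distance factors as \<open>(sqrt (exp u) - sqrt (exp v))\<^sup>2 = exp u * (1 - exp ((v - u)/2))\<^sup>2\<close>,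
  and since \<open>\<bar>v - u\<bar> \<le> 2 \<eta> B\<^sub>A\<close>, the elementary bound \<open>\<bar>1 - exp x\<bar> \<ge> \<bar>x\<bar> / (1 + M)\<close> for
  \<open>x \<ge> -M\<close> controls it from below by \<open>exp u * (v - u)\<^sup>2 / (4 (1 + \<eta> B\<^sub>A)\<^sup>2)\<close>.
  Summing gives the claim.
\<close>

lemma abs_one_minus_exp_ge:
  fixes x M :: real
  assumes "M \<ge> 0" and "x \<ge> -M"
  shows "\<bar>x\<bar> / (1 + M) \<le> \<bar>1 - exp x\<bar>"
proof (cases "x \<ge> 0")
  case True
  have "x / (1 + M) \<le> x"
    using True \<open>M \<ge> 0\<close> by (simp add: divide_le_eq mult_le_cancel_left1)
  also have "\<dots> \<le> exp x - 1"
    using exp_ge_add_one_self[of x] by linarith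
  finally show ?thesis
    using True by simp
next
  case False
  define t where "t = -x"
  have t: "0 < t" "t \<le> M"
    using False assms by (auto simp: t_def)
  \<comment> \<open>\<open>1 - exp (-t) \<ge> t / (1 + M)\<close> amounts to \<open>exp t * (1 + M - t) \<ge> 1 + M\<close>.\<close>
  have "1 + M \<le> (1 + t) * (1 + M - t)"
    using t by (simp add: algebra_simps)
  also have "\<dots> \<le> exp t * (1 + M - t)"
    using t exp_ge_add_one_self[of t] by (intro mult_right_mono) auto
  finally have "t / (1 + M) \<le> 1 - exp (-t)"
    using t by (simp add: exp_minus field_simps)
  then show ?thesis
    using t by (simp add: t_def)
qed

lemma sqrt_exp: "sqrt (exp x) = exp (x / 2)"
  by (rule real_sqrt_unique) (simp_all add: power2_eq_square flip: exp_add)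

lemma sqrt_exp_diff_sq_ge:
  fixes a b M :: real
  assumes "M \<ge> 0" and "\<bar>b - a\<bar> \<le> 2 * M"
  shows "exp a * (b - a)\<^sup>2 / (4 * (1 + M)\<^sup>2) \<le> (sqrt (exp a) - sqrt (exp b))\<^sup>2"
proof -
  have "\<bar>(b - a) / 2\<bar> / (1 + M) \<le> \<bar>1 - exp ((b - a) / 2)\<bar>"
    using assms by (intro abs_one_minus_exp_ge) auto
  then have half_gap: "((b - a) / 2 / (1 + M))\<^sup>2 \<le> (1 - exp ((b - a) / 2))\<^sup>2"
    by (metis abs_divide abs_le_square_iff abs_of_nonneg assms(1) add_nonneg_nonneg zero_le_one)
  have "exp a * (b - a)\<^sup>2 / (4 * (1 + M)\<^sup>2) = exp a * ((b - a) / 2 / (1 + M))\<^sup>2"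
    by (simp add: power_divide power2_eq_square algebra_simps)
  also have "\<dots> \<le> exp a * (1 - exp ((b - a) / 2))\<^sup>2"
    using half_gap by simp
  also have "\<dots> = (sqrt (exp a) - sqrt (exp b))\<^sup>2"
    by (simp add: sqrt_exp power2_eq_square algebra_simps diff_divide_distrib flip: exp_add)
  finally show ?thesis .
qed

lemma hellinger_sq_exp_ge:
  fixes u v :: "'b \<Rightarrow> real" and M :: real
  assumes "M \<ge> 0" and "\<And>b. b \<in> B \<Longrightarrow> \<bar>v b - u b\<bar> \<le> 2 * M"
  shows "(\<Sum>b\<in>B. exp (u b) * (v b - u b)\<^sup>2) / (8 * (1 + M)\<^sup>2)
           \<le> hellinger_sq B (\<lambda>b. exp (u b)) (\<lambda>b. exp (v b))"
proof -
  have "(\<Sum>b\<in>B. exp (u b) * (v b - u b)\<^sup>2) / (8 * (1 + M)\<^sup>2)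
          = 1/2 * (\<Sum>b\<in>B. exp (u b) * (v b - u b)\<^sup>2 / (4 * (1 + M)\<^sup>2))"
    by (simp add: sum_divide_distrib)
  also have "\<dots> \<le> 1/2 * (\<Sum>b\<in>B. (sqrt (exp (u b)) - sqrt (exp (v b)))\<^sup>2)"
    using assms by (intro mult_left_mono sum_mono sqrt_exp_diff_sq_ge) auto
  finally show ?thesis
    by (simp add: hellinger_sq_def)
qed

theorem mainTheorem11:
  fixes B :: "'b set" and \<eta> BA :: real and Q Qt :: "'b \<Rightarrow> real"
  assumes "finite B" and "B \<noteq> {}"
    and "\<eta> > 0" and "BA > 0"
    and "\<forall>b\<in>B. \<bar>Q b - lse_value B \<eta> Q\<bar> \<le> BA"
    and "\<forall>b\<in>B. \<bar>Qt b - lse_value B \<eta> Qt\<bar> \<le> BA"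
  shows "hellinger_sq B (\<lambda>b. exp (\<eta> * (Q b - lse_value B \<eta> Q)))
                        (\<lambda>b. exp (\<eta> * (Qt b - lse_value B \<eta> Qt)))
         \<ge> \<eta>^2 / (8 * (1 + \<eta> * BA)^2) *
           (\<Sum>b\<in>B. exp (\<eta> * (Q b - lse_value B \<eta> Q)) *
                    ((Qt b - lse_value B \<eta> Qt) - (Q b - lse_value B \<eta> Q))^2)"
proof -
  define A where "A b = Q b - lse_value B \<eta> Q" for b
  define At where "At b = Qt b - lse_value B \<eta> Qt" for b
  have "\<bar>\<eta> * At b - \<eta> * A b\<bar> \<le> 2 * (\<eta> * BA)" if "b \<in> B" for b
  proof -
    have "\<bar>At b - A b\<bar> \<le> 2 * BA"
      using assms(5,6) that by (force simp: A_def At_def)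
    then show ?thesis
      using \<open>\<eta> > 0\<close> by (simp add: abs_mult flip: right_diff_distrib)
  qed
  then have "(\<Sum>b\<in>B. exp (\<eta> * A b) * (\<eta> * At b - \<eta> * A b)\<^sup>2) / (8 * (1 + \<eta> * BA)\<^sup>2)
               \<le> hellinger_sq B (\<lambda>b. exp (\<eta> * A b)) (\<lambda>b. exp (\<eta> * At b))"
    using assms(3,4) by (intro hellinger_sq_exp_ge) auto
  moreover have "(\<Sum>b\<in>B. exp (\<eta> * A b) * (\<eta> * At b - \<eta> * A b)\<^sup>2)
                   = \<eta>\<^sup>2 * (\<Sum>b\<in>B. exp (\<eta> * A b) * (At b - A b)\<^sup>2)"
    by (simp add: sum_distrib_left power_mult_distrib mult.left_commute flip: right_diff_distrib)
  ultimately show ?thesis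
    by (simp add: A_def At_def)
qed

end
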